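(* Let $n\ge 2$ and let $\gamma:I\to\mathbb{R}^2$ ($0\in I$) be a front without inflection points with $\gamma'(0)=\mathbf{0}$. If $t=0$ is a singular point of each of $Ev(\gamma),Ev^2(\gamma),\dots,Ev^{n-1}(\gamma)$, then $\gamma$ is not $\mathcal{A}$-equivalent to $Cusp_{(n,n+1)}(t)=(t^n,t^{n+1})$ at $t=0$.
   Context: A $C^\infty$ curve $\gamma:I\to\mathbb{R}^2$ is a front if there is a $C^\infty$ map $\nu:I\to S^1$ with $\gamma'\cdot\nu=0$ and $(\gamma,\nu)$ an immersion. With $M$ the anticlockwise rotation by $\pi/2$, $\mu=M(\nu)$, $\ell=\nu'\cdot\mu$, $\beta=\gamma'\cdot\mu$; no inflection points means $\ell\neq0$ on $I$. Evolutes: $\beta_0=\beta$, $\beta_k=\frac{d}{dt}(\beta_{k-1}/\ell)$, $Ev^0(\gamma)=\gamma$, $Ev^{k}(\gamma)=Ev^{k-1}(\gamma)-\frac{\beta_{k-1}}{\ell}M^{k-1}(\nu)$, $Ev=Ev^1$. A point is singular for a curve if its derivative vanishes there. $\mathcal{A}$-equivalence means equivalence via $C^\infty$ diffeomorphism germs of source and target. *)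

theory Defs
  imports "HOL-Analysis.Analysis"
begin

fun Ck_on :: "nat \<Rightarrow> 'a::real_normed_vector set \<Rightarrow> ('a \<Rightarrow> 'b::real_normed_vector) \<Rightarrow> bool" where
  "Ck_on 0 U f = continuous_on U f"
| "Ck_on (Suc k) U f =
     (\<exists>f'. (\<forall>x\<in>U. (f has_derivative f' x) (at x)) \<and> (\<forall>v. Ck_on k U (\<lambda>x. f' x v)))"

definition smooth_on :: "'a::real_normed_vector set \<Rightarrow> ('a \<Rightarrow> 'b::real_normed_vector) \<Rightarrow> bool" where
  "smooth_on U f \<longleftrightarrow> open U \<and> (\<forall>k. Ck_on k U f)"

definition rotM :: "real \<times> real \<Rightarrow> real \<times> real" where
  "rotM p = (- snd p, fst p)"

definition is_front :: "real set \<Rightarrow> (real \<Rightarrow> real \<times> real) \<Rightarrow> (real \<Rightarrow> real \<times> real) \<Rightarrow> bool" where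
  "is_front I \<gamma> \<nu> \<longleftrightarrow> smooth_on I \<gamma> \<and> smooth_on I \<nu> \<and>
     (\<forall>t\<in>I. norm (\<nu> t) = 1) \<and>
     (\<forall>t\<in>I. vector_derivative \<gamma> (at t) \<bullet> \<nu> t = 0) \<and>
     (\<forall>t\<in>I. (vector_derivative \<gamma> (at t), vector_derivative \<nu> (at t)) \<noteq> 0)"

definition ell :: "(real \<Rightarrow> real \<times> real) \<Rightarrow> real \<Rightarrow> real" where
  "ell \<nu> t = vector_derivative \<nu> (at t) \<bullet> rotM (\<nu> t)"

fun betaK :: "(real \<Rightarrow> real \<times> real) \<Rightarrow> (real \<Rightarrow> real \<times> real) \<Rightarrow> nat \<Rightarrow> real \<Rightarrow> real" where
  "betaK \<gamma> \<nu> 0 = (\<lambda>t. vector_derivative \<gamma> (at t) \<bullet> rotM (\<nu> t))"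
| "betaK \<gamma> \<nu> (Suc k) = (\<lambda>t. deriv (\<lambda>s. betaK \<gamma> \<nu> k s / ell \<nu> s) t)"

fun Ev :: "(real \<Rightarrow> real \<times> real) \<Rightarrow> (real \<Rightarrow> real \<times> real) \<Rightarrow> nat \<Rightarrow> real \<Rightarrow> real \<times> real" where
  "Ev \<gamma> \<nu> 0 = \<gamma>"
| "Ev \<gamma> \<nu> (Suc k) = (\<lambda>t. Ev \<gamma> \<nu> k t - (betaK \<gamma> \<nu> k t / ell \<nu> t) *\<^sub>R (rotM ^^ k) (\<nu> t))"

definition diffeo_on :: "'a::real_normed_vector set \<Rightarrow> 'a set \<Rightarrow> ('a \<Rightarrow> 'a) \<Rightarrow> bool" where
  "diffeo_on U V \<phi> \<longleftrightarrow> smooth_on U \<phi> \<and> smooth_on V (inv_into U \<phi>) \<and> bij_betw \<phi> U V"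

definition A_equiv_at :: "(real \<Rightarrow> real \<times> real) \<Rightarrow> real \<Rightarrow> (real \<Rightarrow> real \<times> real) \<Rightarrow> real \<Rightarrow> bool" where
  "A_equiv_at f t0 g s0 \<longleftrightarrow>
     (\<exists>U V \<phi> W W' \<Phi> N.
        diffeo_on U V \<phi> \<and> t0 \<in> U \<and> \<phi> t0 = s0 \<and>
        diffeo_on W W' \<Phi> \<and> f t0 \<in> W \<and> \<Phi> (f t0) = g s0 \<and>
        open N \<and> t0 \<in> N \<and> N \<subseteq> U \<and> f ` N \<subseteq> W \<and>
        (\<forall>t\<in>N. \<Phi> (f t) = g (\<phi> t)))"

definition cusp :: "nat \<Rightarrow> real \<Rightarrow> real \<times> real" where
  "cusp n t = (t ^ n, t ^ (n + 1))"

end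

theory Submission
  imports Defs "HOL-Library.Landau_Symbols"
begin

text \<open>Differentiating the recursion for the evolutes gives \<open>(Ev\<^sup>k \<gamma>)' = \<beta>\<^sub>k M\<^sup>k\<^sup>+\<^sup>1 \<nu>\<close>, so the
  singularity of \<open>\<gamma>, Ev \<gamma>, \<dots>, Ev\<^sup>n\<^sup>-\<^sup>1 \<gamma>\<close> at \<open>0\<close> means that \<open>\<beta>\<^sub>0, \<dots>, \<beta>\<^sub>n\<^sub>-\<^sub>1\<close> vanish at \<open>0\<close>.
  Since \<open>(\<beta>\<^sub>k / \<ell>)' = \<beta>\<^sub>k\<^sub>+\<^sub>1 = (\<beta>\<^sub>k\<^sub>+\<^sub>1 / \<ell>) \<ell>\<close>, integrating down this chain gives
  \<open>\<beta>\<^sub>0 = o(t\<^sup>n\<^sup>-\<^sup>1)\<close> and hence \<open>\<gamma>(t) - \<gamma>(0) = o(t\<^sup>n)\<close>. If \<open>\<Phi> \<circ> \<gamma> = cusp n \<circ> \<phi>\<close>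
  near \<open>0\<close>, then \<open>\<Phi>\<close> is locally Lipschitz and \<open>\<phi>'(0) \<noteq> 0\<close>, so
  \<open>|t|\<^sup>n = O(|\<phi>(t)|\<^sup>n) = O(|\<Phi>(\<gamma>(t)) - \<Phi>(\<gamma>(0))|) = O(|\<gamma>(t) - \<gamma>(0)|) = o(t\<^sup>n)\<close>, which is absurd.\<close>

section \<open>Smooth curves\<close>

fun vector_Ck_on :: "nat \<Rightarrow> real set \<Rightarrow> (real \<Rightarrow> 'a::real_normed_vector) \<Rightarrow> bool" where
  "vector_Ck_on 0 U f = continuous_on U f"
| "vector_Ck_on (Suc k) U f =
     (\<exists>f'. (\<forall>x\<in>U. (f has_vector_derivative f' x) (at x)) \<and> vector_Ck_on k U f')"

lemma vector_Ck_on_SucD: "vector_Ck_on (Suc k) U f \<Longrightarrow> vector_Ck_on k U f"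
proof (induction k arbitrary: f)
  case 0
  then obtain f' where "\<forall>x\<in>U. (f has_vector_derivative f' x) (at x)"
    by auto
  then show ?case
    by (auto intro!: continuous_at_imp_continuous_on intro: has_vector_derivative_continuous)
next
  case (Suc k)
  then show ?case by auto
qed

lemma vector_Ck_on_cong:
  assumes "open U" "vector_Ck_on k U f" "\<And>x. x \<in> U \<Longrightarrow> f x = g x"
  shows "vector_Ck_on k U g"
  using assms(2,3)
proof (induction k arbitrary: f g)
  case 0
  then show ?case using continuous_on_cong by force
next
  case (Suc k)
  then obtain f' where "\<forall>x\<in>U. (f has_vector_derivative f' x) (at x)" "vector_Ck_on k U f'"
    by auto
  moreover have "\<forall>x\<in>U. (g has_vector_derivative f' x) (at x)"
    using calculation(1) Suc.prems(2) assms(1) has_vector_derivative_transform_within_open by blast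
  ultimately show ?case by auto
qed

lemma vector_Ck_on_add:
  "vector_Ck_on k U f \<Longrightarrow> vector_Ck_on k U g \<Longrightarrow> vector_Ck_on k U (\<lambda>x. f x + g x)"
proof (induction k arbitrary: f g)
  case 0
  then show ?case by (auto intro: continuous_on_add)
next
  case (Suc k)
  then obtain f' g' where "\<forall>x\<in>U. (f has_vector_derivative f' x) (at x)" "vector_Ck_on k U f'"
     "\<forall>x\<in>U. (g has_vector_derivative g' x) (at x)" "vector_Ck_on k U g'" by auto
  with Suc.IH show ?case
    by (auto intro!: exI[of _ "\<lambda>x. f' x + g' x"] has_vector_derivative_add)
qed

lemma vector_Ck_on_linear:
  "bounded_linear L \<Longrightarrow> vector_Ck_on k U f \<Longrightarrow> vector_Ck_on k U (\<lambda>x. L (f x))"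
proof (induction k arbitrary: f)
  case 0
  then show ?case by (simp add: bounded_linear.continuous_on)
next
  case (Suc k)
  then obtain f' where "\<forall>x\<in>U. (f has_vector_derivative f' x) (at x)" "vector_Ck_on k U f'"
    by auto
  moreover have "vector_Ck_on k U (\<lambda>x. L (f' x))"
    using Suc.IH Suc.prems(1) calculation(2) .
  ultimately show ?case
    using bounded_linear.has_vector_derivative[OF Suc.prems(1)] by (auto intro!: exI[of _ "\<lambda>x. L (f' x)"])
qed

lemma vector_Ck_on_bilinear:
  "bounded_bilinear P \<Longrightarrow> vector_Ck_on k U f \<Longrightarrow> vector_Ck_on k U g \<Longrightarrow>
    vector_Ck_on k U (\<lambda>x. P (f x) (g x))"
proof (induction k arbitrary: f g)
  case 0
  then show ?case by (simp add: bounded_bilinear.continuous_on)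
next
  case (Suc k)
  then obtain f' g' where f': "\<forall>x\<in>U. (f has_vector_derivative f' x) (at x)" "vector_Ck_on k U f'"
    and g': "\<forall>x\<in>U. (g has_vector_derivative g' x) (at x)" "vector_Ck_on k U g'"
    by auto
  have "vector_Ck_on k U (\<lambda>x. P (f x) (g' x) + P (f' x) (g x))"
    using Suc.IH[OF Suc.prems(1)] vector_Ck_on_SucD[OF Suc.prems(2)] vector_Ck_on_SucD[OF Suc.prems(3)]
      f'(2) g'(2) by (intro vector_Ck_on_add)
  moreover have "\<forall>x\<in>U. ((\<lambda>x. P (f x) (g x)) has_vector_derivative P (f x) (g' x) + P (f' x) (g x)) (at x)"
    using f'(1) g'(1) bounded_bilinear.has_vector_derivative[OF Suc.prems(1)] by blast
  ultimately show ?case by auto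
qed

lemma vector_Ck_on_inverse:
  "vector_Ck_on k U f \<Longrightarrow> (\<forall>x\<in>U. f x \<noteq> 0) \<Longrightarrow> vector_Ck_on k U (\<lambda>x. inverse (f x :: real))"
proof (induction k arbitrary: f)
  case 0
  then show ?case by (auto intro: continuous_on_inverse)
next
  case (Suc k)
  then obtain f' where f': "\<forall>x\<in>U. (f has_vector_derivative f' x) (at x)" "vector_Ck_on k U f'"
    by auto
  have inv: "vector_Ck_on k U (\<lambda>x. inverse (f x))"
    using Suc vector_Ck_on_SucD by blast
  have "vector_Ck_on k U (\<lambda>x. - (f' x * (inverse (f x) * inverse (f x))))"
    by (intro vector_Ck_on_linear[OF bounded_linear_minus[OF bounded_linear_ident]]
        vector_Ck_on_bilinear[OF bounded_bilinear_mult] f'(2) inv)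
  moreover have "\<forall>x\<in>U. ((\<lambda>x. inverse (f x)) has_vector_derivative
      - (f' x * (inverse (f x) * inverse (f x)))) (at x)"
  proof
    fix x assume "x \<in> U"
    then have "(f has_real_derivative f' x) (at x)" "f x \<noteq> 0"
      using f'(1) Suc.prems(2) by (auto simp: has_real_derivative_iff_has_vector_derivative)
    then have "((\<lambda>x. inverse (f x)) has_real_derivative
        - (f' x * (inverse (f x) * inverse (f x)))) (at x)"
      by (auto intro!: derivative_eq_intros simp: power2_eq_square)
    then show "((\<lambda>x. inverse (f x)) has_vector_derivative
        - (f' x * (inverse (f x) * inverse (f x)))) (at x)"
      by (simp add: has_real_derivative_iff_has_vector_derivative)
  qed
  ultimately show ?case by auto
qed

lemma Ck_on_imp_vector_Ck_on:
  "Ck_on k U f \<Longrightarrow> vector_Ck_on k U (f :: real \<Rightarrow> 'a::real_normed_vector)"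
proof (induction k arbitrary: f)
  case 0
  then show ?case by simp
next
  case (Suc k)
  then obtain f' where f': "\<forall>x\<in>U. (f has_derivative f' x) (at x)" "\<forall>v. Ck_on k U (\<lambda>x. f' x v)"
    by auto
  have "(f has_vector_derivative f' x 1) (at x)" if "x \<in> U" for x
  proof -
    have "linear (f' x)"
      using f'(1) that has_derivative_linear by blast
    then have "f' x = (\<lambda>h. h *\<^sub>R f' x 1)"
      by (metis linear_cmul mult.right_neutral real_scaleR_def)
    then show ?thesis
      using f'(1) that by (metis has_vector_derivative_def)
  qed
  with Suc.IH f'(2) show ?case by (auto intro!: exI[of _ "\<lambda>x. f' x 1"])
qed

definition vector_smooth_on :: "real set \<Rightarrow> (real \<Rightarrow> 'a::real_normed_vector) \<Rightarrow> bool" where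
  "vector_smooth_on U f \<longleftrightarrow> (\<forall>k. vector_Ck_on k U f)"

lemma smooth_on_imp_vector_smooth_on:
  "smooth_on U f \<Longrightarrow> vector_smooth_on U (f :: real \<Rightarrow> 'a::real_normed_vector)"
  by (simp add: smooth_on_def vector_smooth_on_def Ck_on_imp_vector_Ck_on)

lemma vector_smooth_on_has_vector_derivative:
  assumes "vector_smooth_on U f" "x \<in> U"
  shows "(f has_vector_derivative vector_derivative f (at x)) (at x)"
proof -
  have "vector_Ck_on (Suc 0) U f"
    using assms(1) unfolding vector_smooth_on_def by blast
  then show ?thesis
    using assms(2) vector_derivative_at by fastforce
qed

lemma vector_smooth_on_vector_derivative:
  assumes "open U" "vector_smooth_on U f"
  shows "vector_smooth_on U (\<lambda>x. vector_derivative f (at x))"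
  unfolding vector_smooth_on_def
proof
  fix k
  obtain f' where f': "\<forall>x\<in>U. (f has_vector_derivative f' x) (at x)" "vector_Ck_on k U f'"
    using assms(2) unfolding vector_smooth_on_def by (metis vector_Ck_on.simps(2))
  show "vector_Ck_on k U (\<lambda>x. vector_derivative f (at x))"
    by (rule vector_Ck_on_cong[OF assms(1) f'(2)]) (use f'(1) vector_derivative_at in force)
qed

lemma vector_smooth_on_cong:
  "open U \<Longrightarrow> vector_smooth_on U f \<Longrightarrow> (\<And>x. x \<in> U \<Longrightarrow> f x = g x) \<Longrightarrow> vector_smooth_on U g"
  unfolding vector_smooth_on_def using vector_Ck_on_cong by blast

lemma vector_smooth_on_linear:
  "bounded_linear L \<Longrightarrow> vector_smooth_on U f \<Longrightarrow> vector_smooth_on U (\<lambda>x. L (f x))"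
  unfolding vector_smooth_on_def using vector_Ck_on_linear by blast

lemma vector_smooth_on_bilinear:
  "bounded_bilinear P \<Longrightarrow> vector_smooth_on U f \<Longrightarrow> vector_smooth_on U g \<Longrightarrow>
    vector_smooth_on U (\<lambda>x. P (f x) (g x))"
  unfolding vector_smooth_on_def using vector_Ck_on_bilinear by blast

lemma vector_smooth_on_divide:
  assumes "vector_smooth_on U f" "vector_smooth_on U g" "\<forall>x\<in>U. g x \<noteq> 0"
  shows "vector_smooth_on U (\<lambda>x. f x / g x :: real)"
proof -
  have "vector_smooth_on U (\<lambda>x. inverse (g x))"
    using assms(2,3) vector_Ck_on_inverse unfolding vector_smooth_on_def by blast
  then show ?thesis
    using vector_smooth_on_bilinear[OF bounded_bilinear_mult assms(1)] by (simp add: divide_inverse)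
qed

section \<open>Flatness at the origin\<close>

lemma bigo_1_if_isCont:
  fixes f :: "'a::t2_space \<Rightarrow> 'b::real_normed_field"
  shows "isCont f x \<Longrightarrow> f \<in> O[nhds x](\<lambda>_. 1)"
  by (intro bigoI_tendsto[where c = "f x"]) (auto simp: continuous_at tendsto_at_iff_tendsto_nhds)

text \<open>The filter is \<open>nhds 0\<close> rather than \<open>at 0\<close>: the mean value estimate needs the bound
  on \<open>f'\<close> at \<open>0\<close> itself.\<close>
lemma smallo_power_Suc_if_has_vector_derivative:
  fixes f f' :: "real \<Rightarrow> 'a::real_normed_vector"
  assumes der: "\<forall>\<^sub>F t in nhds 0. (f has_vector_derivative f' t) (at t)"
    and f0: "f 0 = 0"
    and small: "(\<lambda>t. norm (f' t)) \<in> o[nhds 0](\<lambda>t. t ^ m)"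
  shows "(\<lambda>t. norm (f t)) \<in> o[nhds 0](\<lambda>t. t ^ Suc m)"
proof (rule landau_o.smallI)
  fix c :: real assume "c > 0"
  with small have "\<forall>\<^sub>F t in nhds 0. norm (f' t) \<le> c * \<bar>t\<bar> ^ m"
    by (auto dest: landau_o.smallD simp: power_abs)
  with der have "\<forall>\<^sub>F s in nhds 0. (f has_vector_derivative f' s) (at s) \<and> norm (f' s) \<le> c * \<bar>s\<bar> ^ m"
    by (rule eventually_conj)
  then obtain d where "d > 0"
    and d: "\<And>s. \<bar>s\<bar> < d \<Longrightarrow> (f has_vector_derivative f' s) (at s) \<and> norm (f' s) \<le> c * \<bar>s\<bar> ^ m"
    unfolding eventually_nhds_metric dist_real_def by auto
  have "norm (f t) \<le> c * \<bar>t\<bar> ^ Suc m" if "\<bar>t\<bar> < d" for t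
  proof -
    define S where "S = {-\<bar>t\<bar>..\<bar>t\<bar>}"
    have "(f has_derivative (\<lambda>h. h *\<^sub>R f' s)) (at s within S)" if "s \<in> S" for s
      using d[of s] \<open>\<bar>t\<bar> < d\<close> that
      by (auto simp: S_def has_vector_derivative_def intro: has_derivative_at_withinI)
    moreover have "onorm (\<lambda>h. h *\<^sub>R f' s) \<le> c * \<bar>t\<bar> ^ m" if "s \<in> S" for s
    proof -
      have "onorm (\<lambda>h. h *\<^sub>R f' s) = norm (f' s)"
        using onorm_scaleR_left[OF bounded_linear_ident, of "f' s"] by (simp add: onorm_id)
      also have "\<dots> \<le> c * \<bar>s\<bar> ^ m"
        using d[of s] \<open>\<bar>t\<bar> < d\<close> that by (auto simp: S_def)
      also have "\<dots> \<le> c * \<bar>t\<bar> ^ m"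
        using that \<open>c > 0\<close> by (auto simp: S_def intro!: power_mono)
      finally show ?thesis .
    qed
    ultimately have "norm (f t - f 0) \<le> c * \<bar>t\<bar> ^ m * norm (t - 0)"
      by (intro differentiable_bound[of S]) (auto simp: S_def)
    then show ?thesis
      using f0 by (simp add: mult.commute mult.left_commute)
  qed
  with \<open>d > 0\<close> show "\<forall>\<^sub>F t in nhds 0. norm (norm (f t)) \<le> c * norm (t ^ Suc m)"
    unfolding eventually_nhds_metric dist_real_def by (auto simp: abs_mult power_abs)
qed

lemma smallo_power_if_vanishing_derivative_chain:
  fixes g :: "nat \<Rightarrow> real \<Rightarrow> real" and l :: "real \<Rightarrow> real"
  assumes der: "\<forall>\<^sub>F t in nhds 0. \<forall>j<N. (g j has_real_derivative g (Suc j) t * l t) (at t)"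
    and vanish: "\<forall>j\<le>N. g j 0 = 0" and "isCont (g N) 0" and "isCont l 0"
  shows "g 0 \<in> o[nhds 0](\<lambda>t. t ^ N)"
proof -
  have "g (N - m) \<in> o[nhds 0](\<lambda>t. t ^ m)" if "m \<le> N" for m
    using that
  proof (induction m)
    case 0
    have "(g N \<longlongrightarrow> 0) (nhds 0)"
      using \<open>isCont (g N) 0\<close> vanish tendsto_at_iff_tendsto_nhds[of "g N" 0]
      by (simp add: continuous_at)
    then show ?case
      by (intro smalloI_tendsto) auto
  next
    case (Suc m)
    have "(\<lambda>t. g (N - m) t * l t) \<in> o[nhds 0](\<lambda>t. t ^ m * 1)"
      using Suc bigo_1_if_isCont[OF \<open>isCont l 0\<close>] by (intro landau_o.small_big_mult) auto
    moreover have "\<forall>\<^sub>F t in nhds 0.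
        (g (N - Suc m) has_vector_derivative g (N - m) t * l t) (at t)"
    proof (rule eventually_mono[OF der])
      fix t assume "\<forall>j<N. (g j has_real_derivative g (Suc j) t * l t) (at t)"
      moreover have "N - Suc m < N" "Suc (N - Suc m) = N - m"
        using Suc.prems by auto
      ultimately show "(g (N - Suc m) has_vector_derivative g (N - m) t * l t) (at t)"
        by (metis has_real_derivative_iff_has_vector_derivative)
    qed
    ultimately have "(\<lambda>t. norm (g (N - Suc m) t)) \<in> o[nhds 0](\<lambda>t. t ^ Suc m)"
      using vanish by (intro smallo_power_Suc_if_has_vector_derivative) auto
    then show ?case by simp
  qed
  from this[of N] show ?thesis by simp
qed

section \<open>An obstruction to being a cusp\<close>

lemma diffeo_on_has_nonzero_derivative:
  fixes \<phi> :: "real \<Rightarrow> real"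
  assumes "diffeo_on U V \<phi>" "x \<in> U"
  obtains d where "(\<phi> has_real_derivative d) (at x)" "d \<noteq> 0"
proof -
  have smooth: "smooth_on U \<phi>" "smooth_on V (inv_into U \<phi>)" and bij: "bij_betw \<phi> U V"
    using assms(1) unfolding diffeo_on_def by auto
  have "open U" "\<phi> x \<in> V"
    using smooth(1) bij assms(2) by (auto simp: smooth_on_def bij_betw_apply)
  define d where "d = vector_derivative \<phi> (at x)"
  define e where "e = vector_derivative (inv_into U \<phi>) (at (\<phi> x))"
  have D\<phi>: "(\<phi> has_real_derivative d) (at x)"
    using vector_smooth_on_has_vector_derivative[OF smooth_on_imp_vector_smooth_on[OF smooth(1)] assms(2)]
    by (simp add: d_def has_real_derivative_iff_has_vector_derivative)
  have "(inv_into U \<phi> has_real_derivative e) (at (\<phi> x))"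
    using vector_smooth_on_has_vector_derivative[OF smooth_on_imp_vector_smooth_on[OF smooth(2)] \<open>\<phi> x \<in> V\<close>]
    by (simp add: e_def has_real_derivative_iff_has_vector_derivative)
  from DERIV_chain[OF this D\<phi>] have "((\<lambda>y. y) has_real_derivative e * d) (at x)"
    by (rule has_field_derivative_transform_within_open[OF _ \<open>open U\<close> assms(2)])
      (use bij_betw_imp_inj_on[OF bij] in simp)
  then have "e * d = 1"
    using DERIV_ident DERIV_unique by blast
  with D\<phi> show ?thesis
    using that by force
qed

lemma bigo_diff_if_nonzero_derivative:
  fixes \<phi> :: "real \<Rightarrow> real"
  assumes "(\<phi> has_real_derivative d) (at x)" "d \<noteq> 0"
  shows "(\<lambda>t. t - x) \<in> O[nhds x](\<lambda>t. \<phi> t - \<phi> x)"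
proof (rule landau_o.bigI)
  have "\<bar>d\<bar> / 2 > 0"
    using assms(2) by simp
  with assms(1) obtain r where "r > 0"
    and r: "\<And>t. norm (t - x) < r \<Longrightarrow> norm (\<phi> t - \<phi> x - d * (t - x)) \<le> \<bar>d\<bar> / 2 * norm (t - x)"
    unfolding has_field_derivative_def has_derivative_at_alt by blast
  have "\<bar>t - x\<bar> \<le> 2 / \<bar>d\<bar> * \<bar>\<phi> t - \<phi> x\<bar>" if "dist t x < r" for t
  proof -
    have "\<bar>\<phi> t - \<phi> x - d * (t - x)\<bar> \<le> \<bar>d\<bar> / 2 * \<bar>t - x\<bar>"
      using r[of t] that by (simp add: dist_real_def)
    moreover have "\<bar>d * (t - x)\<bar> \<le> \<bar>\<phi> t - \<phi> x - d * (t - x)\<bar> + \<bar>\<phi> t - \<phi> x\<bar>"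
      by arith
    ultimately have "\<bar>d\<bar> * \<bar>t - x\<bar> \<le> 2 * \<bar>\<phi> t - \<phi> x\<bar>"
      by (simp add: abs_mult)
    with assms(2) show ?thesis
      by (simp add: field_simps)
  qed
  with \<open>r > 0\<close> show "\<forall>\<^sub>F t in nhds x. norm (t - x) \<le> 2 / \<bar>d\<bar> * norm (\<phi> t - \<phi> x)"
    unfolding eventually_nhds_metric by auto
qed (use assms(2) in simp)

lemma bigo_norm_diff_if_has_derivative:
  assumes "(\<Phi> has_derivative D) (at y)"
  shows "(\<lambda>z. norm (\<Phi> z - \<Phi> y)) \<in> O[nhds y](\<lambda>z. norm (z - y))"
proof -
  obtain K where "K > 0" and K: "\<And>v. norm (D v) \<le> norm v * K"
    using has_derivative_bounded_linear[OF assms] bounded_linear.pos_bounded by blast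
  obtain r where "r > 0"
    and r: "\<And>z. norm (z - y) < r \<Longrightarrow> norm (\<Phi> z - \<Phi> y - D (z - y)) \<le> 1 * norm (z - y)"
    using assms unfolding has_derivative_at_alt by (meson zero_less_one)
  have "norm (\<Phi> z - \<Phi> y) \<le> (K + 1) * norm (z - y)" if "dist z y < r" for z
    using r[of z] K[of "z - y"] that norm_triangle_ineq[of "\<Phi> z - \<Phi> y - D (z - y)" "D (z - y)"]
    by (simp add: dist_norm algebra_simps)
  with \<open>r > 0\<close> have "\<forall>\<^sub>F z in nhds y. norm (norm (\<Phi> z - \<Phi> y)) \<le> (K + 1) * norm (norm (z - y))"
    unfolding eventually_nhds_metric by auto
  with \<open>K > 0\<close> show ?thesis
    by (intro landau_o.bigI[of "K + 1"]) auto
qed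

lemma not_A_equiv_cusp_if_flat:
  fixes \<gamma> :: "real \<Rightarrow> real \<times> real"
  assumes "n \<ge> 1" "isCont \<gamma> 0" and flat: "(\<lambda>t. norm (\<gamma> t - \<gamma> 0)) \<in> o[nhds 0](\<lambda>t. t ^ n)"
  shows "\<not> A_equiv_at \<gamma> 0 (cusp n) 0"
proof
  assume "A_equiv_at \<gamma> 0 (cusp n) 0"
  then obtain U V \<phi> W W' \<Phi> N where \<phi>: "diffeo_on U V \<phi>" "0 \<in> U" "\<phi> 0 = 0"
    and \<Phi>: "diffeo_on W W' \<Phi>" "\<gamma> 0 \<in> W" "\<Phi> (\<gamma> 0) = cusp n 0"
    and N: "open N" "0 \<in> N" and eq: "\<forall>t\<in>N. \<Phi> (\<gamma> t) = cusp n (\<phi> t)"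
    unfolding A_equiv_at_def by (elim exE conjE) (rule that)
  obtain d where "(\<phi> has_real_derivative d) (at 0)" "d \<noteq> 0"
    using diffeo_on_has_nonzero_derivative[OF \<phi>(1,2)] .
  then have "(\<lambda>t. t) \<in> O[nhds 0](\<phi>)"
    using bigo_diff_if_nonzero_derivative[of \<phi> d 0] \<phi>(3) by simp
  then have power: "(\<lambda>t. t ^ n) \<in> O[nhds 0](\<lambda>t. \<phi> t ^ n)"
    by (rule landau_o.big_power)
  have cusp: "(\<lambda>t. \<phi> t ^ n) \<in> O[nhds 0](\<lambda>t. norm (\<Phi> (\<gamma> t) - \<Phi> (\<gamma> 0)))"
  proof (rule landau_o.bigI[of 1])
    have "\<forall>\<^sub>F t in nhds 0. t \<in> N"
      using N by (rule eventually_nhds_in_open)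
    then show "\<forall>\<^sub>F t in nhds 0. norm (\<phi> t ^ n) \<le> 1 * norm (norm (\<Phi> (\<gamma> t) - \<Phi> (\<gamma> 0)))"
    proof eventually_elim
      case (elim t)
      have "norm (\<phi> t ^ n) \<le> norm (cusp n (\<phi> t))"
        unfolding cusp_def by (rule norm_fst_le)
      moreover have "\<Phi> (\<gamma> t) - \<Phi> (\<gamma> 0) = cusp n (\<phi> t)"
        using eq elim \<Phi>(3) \<open>n \<ge> 1\<close> by (simp add: cusp_def zero_prod_def)
      ultimately show ?case
        by simp
    qed
  qed simp
  have lipschitz: "(\<lambda>t. norm (\<Phi> (\<gamma> t) - \<Phi> (\<gamma> 0))) \<in> O[nhds 0](\<lambda>t. norm (\<gamma> t - \<gamma> 0))"
  proof (rule landau_o.big.compose)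
    have "Ck_on (Suc 0) W \<Phi>"
      using \<Phi>(1) unfolding diffeo_on_def smooth_on_def by blast
    then obtain D where "(\<Phi> has_derivative D) (at (\<gamma> 0))"
      using \<Phi>(2) by auto
    then show "(\<lambda>y. norm (\<Phi> y - \<Phi> (\<gamma> 0))) \<in> O[nhds (\<gamma> 0)](\<lambda>y. norm (y - \<gamma> 0))"
      by (rule bigo_norm_diff_if_has_derivative)
    show "filterlim \<gamma> (nhds (\<gamma> 0)) (nhds 0)"
      using \<open>isCont \<gamma> 0\<close> tendsto_at_iff_tendsto_nhds[of \<gamma> 0] by (simp add: continuous_at)
  qed
  have "(\<lambda>t. t ^ n) \<in> o[nhds 0](\<lambda>t. t ^ n :: real)"
    using landau_o.big_trans[OF landau_o.big_trans[OF power cusp] lipschitz] flat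
    by (rule landau_o.big_small_trans)
  then have "\<forall>\<^sub>F t in nhds 0. t ^ n = (0::real)"
    by (rule landau_o.small_refl_iff[THEN iffD1])
  then obtain r :: real where "r > 0" and vanish: "\<forall>t::real. dist t 0 < r \<longrightarrow> t ^ n = 0"
    unfolding eventually_nhds_metric by (elim exE conjE) (rule that)
  then have "(r / 2) ^ n = 0"
    using vanish[rule_format, of "r / 2"] by (simp add: dist_real_def)
  with \<open>r > 0\<close> show False
    by simp
qed

section \<open>Fronts and their evolutes\<close>

lemma bounded_linear_rotM: "bounded_linear rotM"
  by (simp add: linear_conv_bounded_linear[symmetric]) (auto intro!: linearI simp: rotM_def)

lemma bounded_linear_rotM_pow: "bounded_linear (rotM ^^ k)"
proof (induction k)
  case 0
  then show ?case by (simp add: id_def bounded_linear_ident)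
next
  case (Suc k)
  then show ?case
    using bounded_linear_compose[OF bounded_linear_rotM Suc] by (simp add: o_def)
qed

lemma norm_rotM: "norm (rotM p) = norm p"
  by (cases p) (simp add: rotM_def norm_Pair add.commute)

lemma norm_rotM_pow: "norm ((rotM ^^ k) p) = norm p"
  by (induction k) (auto simp: norm_rotM)

lemma rotM_pow_Suc_Suc: "(rotM ^^ Suc (Suc k)) p = - (rotM ^^ k) p"
proof -
  have "(rotM ^^ Suc (Suc k)) p = (rotM ^^ k) (rotM (rotM p))"
    by (simp add: funpow_Suc_right del: funpow.simps)
  also have "\<dots> = (rotM ^^ k) (- p)"
    by (cases p) (simp add: rotM_def)
  also have "\<dots> = - (rotM ^^ k) p"
    by (rule linear_neg[OF bounded_linear.linear[OF bounded_linear_rotM_pow]])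
  finally show ?thesis .
qed

lemma orthogonal_eq_scaleR_rotM:
  assumes "norm p = 1" "v \<bullet> p = 0"
  shows "v = (v \<bullet> rotM p) *\<^sub>R rotM p"
proof -
  obtain a b x y where p: "p = (a, b)" and v: "v = (x, y)"
    by (cases p, cases v)
  have "a * a + b * b = 1" "x * a + y * b = 0"
    using assms by (simp_all add: p v norm_Pair power2_eq_square)
  then have "x = (y * a - x * b) * - b" "y = (y * a - x * b) * a"
    by algebra+
  then show ?thesis
    by (simp add: p v rotM_def)
qed

locale front_without_inflections =
  fixes I :: "real set" and \<gamma> \<nu> :: "real \<Rightarrow> real \<times> real"
  assumes open_I: "open I" and front: "is_front I \<gamma> \<nu>" and ell_nonzero: "\<forall>t\<in>I. ell \<nu> t \<noteq> 0"
begin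

definition ev_coeff :: "nat \<Rightarrow> real \<Rightarrow> real" where
  "ev_coeff k t = betaK \<gamma> \<nu> k t / ell \<nu> t"

lemma smooth_gamma: "vector_smooth_on I \<gamma>"
  and smooth_nu: "vector_smooth_on I \<nu>"
  using front smooth_on_imp_vector_smooth_on unfolding is_front_def by blast+

lemma norm_nu: "t \<in> I \<Longrightarrow> norm (\<nu> t) = 1"
  using front unfolding is_front_def by blast

lemma nu_has_vector_derivative:
  assumes "t \<in> I"
  shows "(\<nu> has_vector_derivative ell \<nu> t *\<^sub>R rotM (\<nu> t)) (at t)"
proof -
  define \<nu>' where "\<nu>' = vector_derivative \<nu> (at t)"
  have D: "(\<nu> has_vector_derivative \<nu>') (at t)"
    unfolding \<nu>'_def by (rule vector_smooth_on_has_vector_derivative[OF smooth_nu assms])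
  have "((\<lambda>s. \<nu> s \<bullet> \<nu> s) has_real_derivative \<nu> t \<bullet> \<nu>' + \<nu>' \<bullet> \<nu> t) (at t)"
    using bounded_bilinear.has_vector_derivative[OF bounded_bilinear_inner D D]
    by (simp add: has_real_derivative_iff_has_vector_derivative)
  moreover have "((\<lambda>s. \<nu> s \<bullet> \<nu> s) has_real_derivative 0) (at t)"
    by (rule has_field_derivative_transform_within_open[OF DERIV_const open_I assms])
      (simp add: norm_nu dot_square_norm)
  ultimately have "\<nu>' \<bullet> \<nu> t = 0"
    using DERIV_unique by (fastforce simp: inner_commute)
  then have "\<nu>' = ell \<nu> t *\<^sub>R rotM (\<nu> t)"
    using orthogonal_eq_scaleR_rotM[OF norm_nu[OF assms]] by (simp add: ell_def \<nu>'_def)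
  with D show ?thesis
    by simp
qed

lemma gamma_has_vector_derivative:
  assumes "t \<in> I"
  shows "(\<gamma> has_vector_derivative betaK \<gamma> \<nu> 0 t *\<^sub>R rotM (\<nu> t)) (at t)"
proof -
  have "vector_derivative \<gamma> (at t) \<bullet> \<nu> t = 0"
    using front assms unfolding is_front_def by blast
  then have "vector_derivative \<gamma> (at t) = betaK \<gamma> \<nu> 0 t *\<^sub>R rotM (\<nu> t)"
    using orthogonal_eq_scaleR_rotM[OF norm_nu[OF assms]] by simp
  then show ?thesis
    using vector_smooth_on_has_vector_derivative[OF smooth_gamma assms] by simp
qed

lemma smooth_ell: "vector_smooth_on I (ell \<nu>)"
proof -
  have "vector_smooth_on I (\<lambda>t. vector_derivative \<nu> (at t) \<bullet> rotM (\<nu> t))"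
    by (intro vector_smooth_on_bilinear[OF bounded_bilinear_inner]
        vector_smooth_on_vector_derivative[OF open_I smooth_nu]
        vector_smooth_on_linear[OF bounded_linear_rotM smooth_nu])
  then show ?thesis
    by (simp add: ell_def[abs_def])
qed

lemma betaK_Suc_eq_vector_derivative:
  assumes "vector_smooth_on I (ev_coeff k)" "t \<in> I"
  shows "betaK \<gamma> \<nu> (Suc k) t = vector_derivative (ev_coeff k) (at t)"
proof -
  have "(ev_coeff k has_real_derivative vector_derivative (ev_coeff k) (at t)) (at t)"
    using vector_smooth_on_has_vector_derivative[OF assms]
    by (simp add: has_real_derivative_iff_has_vector_derivative)
  then have "deriv (ev_coeff k) t = vector_derivative (ev_coeff k) (at t)"
    by (rule DERIV_imp_deriv)
  then show ?thesis
    by (simp add: ev_coeff_def[abs_def])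
qed

lemma smooth_ev_coeff: "vector_smooth_on I (ev_coeff k)"
proof (induction k)
  case 0
  have "vector_smooth_on I (\<lambda>t. vector_derivative \<gamma> (at t) \<bullet> rotM (\<nu> t))"
    by (intro vector_smooth_on_bilinear[OF bounded_bilinear_inner]
        vector_smooth_on_vector_derivative[OF open_I smooth_gamma]
        vector_smooth_on_linear[OF bounded_linear_rotM smooth_nu])
  then show ?case
    unfolding ev_coeff_def[abs_def] betaK.simps using smooth_ell ell_nonzero
    by (rule vector_smooth_on_divide)
next
  case (Suc k)
  have "vector_smooth_on I (\<lambda>t. vector_derivative (ev_coeff k) (at t) / ell \<nu> t)"
    by (rule vector_smooth_on_divide[OF vector_smooth_on_vector_derivative[OF open_I Suc]
          smooth_ell ell_nonzero])
  then show ?case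
    by (rule vector_smooth_on_cong[OF open_I])
      (simp add: ev_coeff_def[of "Suc k"] betaK_Suc_eq_vector_derivative[OF Suc] del: betaK.simps)
qed

lemma ev_coeff_has_real_derivative:
  "t \<in> I \<Longrightarrow> (ev_coeff k has_real_derivative betaK \<gamma> \<nu> (Suc k) t) (at t)"
  using vector_smooth_on_has_vector_derivative[OF smooth_ev_coeff]
    betaK_Suc_eq_vector_derivative[OF smooth_ev_coeff]
  by (simp add: has_real_derivative_iff_has_vector_derivative)

lemma betaK_eq_ev_coeff_mult_ell: "t \<in> I \<Longrightarrow> betaK \<gamma> \<nu> k t = ev_coeff k t * ell \<nu> t"
  using ell_nonzero by (simp add: ev_coeff_def)

text \<open>The formula includes \<open>Ev 0 = \<gamma>\<close>; the induction step uses \<open>M\<^sup>k\<^sup>+\<^sup>2 = - M\<^sup>k\<close>.\<close>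
lemma Ev_has_vector_derivative:
  assumes "t \<in> I"
  shows "(Ev \<gamma> \<nu> k has_vector_derivative betaK \<gamma> \<nu> k t *\<^sub>R (rotM ^^ Suc k) (\<nu> t)) (at t)"
proof (induction k)
  case 0
  then show ?case
    using gamma_has_vector_derivative[OF assms] by simp
next
  case (Suc k)
  have "ev_coeff k t *\<^sub>R (rotM ^^ k) (ell \<nu> t *\<^sub>R rotM (\<nu> t))
      = betaK \<gamma> \<nu> k t *\<^sub>R (rotM ^^ Suc k) (\<nu> t)"
    using linear_cmul[OF bounded_linear.linear[OF bounded_linear_rotM_pow]]
    by (simp add: betaK_eq_ev_coeff_mult_ell[OF assms] funpow_Suc_right del: funpow.simps)
  moreover have "((\<lambda>s. ev_coeff k s *\<^sub>R (rotM ^^ k) (\<nu> s)) has_vector_derivative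
      ev_coeff k t *\<^sub>R (rotM ^^ k) (ell \<nu> t *\<^sub>R rotM (\<nu> t))
        + betaK \<gamma> \<nu> (Suc k) t *\<^sub>R (rotM ^^ k) (\<nu> t)) (at t)"
    using ev_coeff_has_real_derivative[OF assms, unfolded has_real_derivative_iff_has_vector_derivative]
      bounded_linear.has_vector_derivative[OF bounded_linear_rotM_pow nu_has_vector_derivative[OF assms]]
    by (rule bounded_bilinear.has_vector_derivative[OF bounded_bilinear_scaleR])
  ultimately have "((\<lambda>s. ev_coeff k s *\<^sub>R (rotM ^^ k) (\<nu> s)) has_vector_derivative
      betaK \<gamma> \<nu> k t *\<^sub>R (rotM ^^ Suc k) (\<nu> t) + betaK \<gamma> \<nu> (Suc k) t *\<^sub>R (rotM ^^ k) (\<nu> t)) (at t)"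
    by (simp only:)
  from has_vector_derivative_diff[OF Suc this]
  have "((\<lambda>s. Ev \<gamma> \<nu> k s - ev_coeff k s *\<^sub>R (rotM ^^ k) (\<nu> s)) has_vector_derivative
      betaK \<gamma> \<nu> (Suc k) t *\<^sub>R (rotM ^^ Suc (Suc k)) (\<nu> t)) (at t)"
    by (simp add: rotM_pow_Suc_Suc del: funpow.simps betaK.simps)
  moreover have "Ev \<gamma> \<nu> (Suc k) = (\<lambda>s. Ev \<gamma> \<nu> k s - ev_coeff k s *\<^sub>R (rotM ^^ k) (\<nu> s))"
    by (simp add: ev_coeff_def fun_eq_iff del: funpow.simps betaK.simps)
  ultimately show ?case
    by simp
qed

lemma betaK_eq_0_if_singular:
  assumes "t \<in> I" "(Ev \<gamma> \<nu> k has_vector_derivative 0) (at t)"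
  shows "betaK \<gamma> \<nu> k t = 0"
proof -
  have "betaK \<gamma> \<nu> k t *\<^sub>R (rotM ^^ Suc k) (\<nu> t) = 0"
    using vector_derivative_unique_at[OF Ev_has_vector_derivative[OF assms(1)] assms(2)] .
  moreover have "(rotM ^^ Suc k) (\<nu> t) \<noteq> 0"
    using norm_rotM_pow[of "Suc k" "\<nu> t"] norm_nu[OF assms(1)] by auto
  ultimately show ?thesis
    by simp
qed

lemma gamma_flat_if_betaK_vanish:
  assumes "0 \<in> I" "\<forall>k\<le>N. betaK \<gamma> \<nu> k 0 = 0"
  shows "(\<lambda>t. norm (\<gamma> t - \<gamma> 0)) \<in> o[nhds 0](\<lambda>t. t ^ Suc N)"
proof -
  have near: "\<forall>\<^sub>F t in nhds 0. t \<in> I"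
    by (rule eventually_nhds_in_open[OF open_I assms(1)])
  have cont: "isCont f 0" if "vector_smooth_on I f" for f :: "real \<Rightarrow> real"
    using vector_smooth_on_has_vector_derivative[OF that assms(1)] has_vector_derivative_continuous
    by blast
  have "\<forall>\<^sub>F t in nhds 0. \<forall>j<N.
      (ev_coeff j has_real_derivative ev_coeff (Suc j) t * ell \<nu> t) (at t)"
    using near by eventually_elim
      (simp add: ev_coeff_has_real_derivative betaK_eq_ev_coeff_mult_ell[symmetric] del: betaK.simps)
  moreover have "\<forall>j\<le>N. ev_coeff j 0 = 0"
    using assms(2) by (simp add: ev_coeff_def del: betaK.simps)
  ultimately have "ev_coeff 0 \<in> o[nhds 0](\<lambda>t. t ^ N)"
    using cont[OF smooth_ev_coeff] cont[OF smooth_ell]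
    by (rule smallo_power_if_vanishing_derivative_chain)
  then have "(\<lambda>t. ev_coeff 0 t * ell \<nu> t) \<in> o[nhds 0](\<lambda>t. t ^ N * 1)"
    using bigo_1_if_isCont[OF cont[OF smooth_ell]] by (rule landau_o.small_big_mult)
  moreover have "\<forall>\<^sub>F t in nhds 0.
      norm (betaK \<gamma> \<nu> 0 t *\<^sub>R rotM (\<nu> t)) = \<bar>ev_coeff 0 t * ell \<nu> t\<bar>"
    using near by eventually_elim
      (simp add: norm_rotM norm_nu betaK_eq_ev_coeff_mult_ell[symmetric] del: betaK.simps)
  ultimately have "(\<lambda>t. norm (betaK \<gamma> \<nu> 0 t *\<^sub>R rotM (\<nu> t))) \<in> o[nhds 0](\<lambda>t. t ^ N)"
    by (simp add: landau_o.small.in_cong del: betaK.simps)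
  moreover have "\<forall>\<^sub>F t in nhds 0.
      ((\<lambda>t. \<gamma> t - \<gamma> 0) has_vector_derivative betaK \<gamma> \<nu> 0 t *\<^sub>R rotM (\<nu> t)) (at t)"
    using near by eventually_elim
      (use gamma_has_vector_derivative in \<open>auto intro: has_vector_derivative_diff[where g' = 0, simplified]\<close>)
  ultimately show ?thesis
    by (intro smallo_power_Suc_if_has_vector_derivative) auto
qed

end

theorem mainTheorem4:
  fixes n :: nat and I :: "real set" and \<gamma> \<nu> :: "real \<Rightarrow> real \<times> real"
  assumes "n \<ge> 2"
    and "is_interval I" and "open I" and "0 \<in> I"
    and "is_front I \<gamma> \<nu>"
    and "\<forall>t\<in>I. ell \<nu> t \<noteq> 0"
    and "(\<gamma> has_vector_derivative 0) (at 0)"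
    and "\<forall>k\<in>{1..n-1}. (Ev \<gamma> \<nu> k has_vector_derivative 0) (at 0)"
  shows "\<not> A_equiv_at \<gamma> 0 (cusp n) 0"
proof -
  interpret front_without_inflections I \<gamma> \<nu>
    using assms(3,5,6) by unfold_locales
  have "betaK \<gamma> \<nu> k 0 = 0" if "k \<le> n - 1" for k
  proof (rule betaK_eq_0_if_singular[OF \<open>0 \<in> I\<close>])
    show "(Ev \<gamma> \<nu> k has_vector_derivative 0) (at 0)"
      using assms(7) assms(8)[rule_format, of k] that by (cases "k = 0") auto
  qed
  then have "(\<lambda>t. norm (\<gamma> t - \<gamma> 0)) \<in> o[nhds 0](\<lambda>t. t ^ Suc (n - 1))"
    using gamma_flat_if_betaK_vanish[OF \<open>0 \<in> I\<close>] by blast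
  moreover have "isCont \<gamma> 0"
    using assms(7) by (rule has_vector_derivative_continuous)
  ultimately show ?thesis
    using \<open>n \<ge> 2\<close> by (intro not_A_equiv_cusp_if_flat) auto
qed

end
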